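(* Let $G=\overline{B(K_m,K_n)}$ be word-representable and let $S$ be a semi-transitive orientation of $G$. Let $x$ be a vertex of type C, let $u$ be the last vertex (along the Hamiltonian path of the other clique) of the source-group of $x$ and let $v$ be the first vertex of the sink-group of $x$. Let $y\ne x$ be a vertex in the same clique as $x$. Then: (1) if $x\to y$, then $y$ is not a type A vertex adjacent to both $u$ and $v$; and if $y$ is of type C, then $u$ does not belong to the sink-group of $y$; (2) if $y\to x$, then $y$ is not a type B vertex adjacent to both $u$ and $v$; and if $y$ is of type C, then $v$ does not belong to the source-group of $y$.
   Context: $\overline{B(K_m,K_n)}$ denotes a graph whose vertex set is the disjoint union of two cliques $K_m$ and $K_n$ with arbitrary edges between them. An orientation is semi-transitive if it is acyclic and shortcut-free, where a shortcut is an induced subgraph on vertices $v_0,\dots,v_t$ ($t\ge 3$) such that $v_0\to\cdots\to v_t$ is a directed path, $v_0\to v_t$ is an edge, and some pair $v_i,v_j$ is non-adjacent. Such an orientation induces a transitive orientation on each clique, so each clique with $l$ vertices has a directed Hamiltonian path $p_1\to\cdots\to p_l$ with $p_i\to p_j$ iff $i<j$. For a vertex $x$ in one clique, with $p_1\to\cdots\to p_l$ the path of the other clique: $x$ is of type A if its neighbours in the other clique are consecutive vertices $p_a,\dots,p_b$ (possibly none) with all edges directed away from $x$; type B if the same holds with all edges directed towards $x$; type C if there are $1\le s<t\le l$ such that its neighbours in the other clique are exactly $p_1,\dots,p_s$ (with $p_i\to x$), called the source-group, and $p_t,\dots,p_l$ (with $x\to p_i$), called the sink-group. Types of $y$ are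 taken with respect to the same other clique. *)

theory Defs
  imports Main
begin

definition clique_union_graph :: "'v set \<Rightarrow> 'v set \<Rightarrow> ('v \<Rightarrow> 'v \<Rightarrow> bool) \<Rightarrow> bool" where
  "clique_union_graph X Y E \<longleftrightarrow>
     X \<inter> Y = {} \<and> finite X \<and> finite Y \<and>
     (\<forall>a b. E a b \<longrightarrow> a \<in> X \<union> Y \<and> b \<in> X \<union> Y \<and> a \<noteq> b) \<and>
     (\<forall>a b. E a b \<longrightarrow> E b a) \<and>
     (\<forall>a\<in>X. \<forall>b\<in>X. a \<noteq> b \<longrightarrow> E a b) \<and>
     (\<forall>a\<in>Y. \<forall>b\<in>Y. a \<noteq> b \<longrightarrow> E a b)"

definition alternate :: "'v list \<Rightarrow> 'v \<Rightarrow> 'v \<Rightarrow> bool" where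
  "alternate w a b \<longleftrightarrow>
     (let u = filter (\<lambda>c. c = a \<or> c = b) w in \<forall>i. Suc i < length u \<longrightarrow> u ! i \<noteq> u ! Suc i)"

definition word_representable :: "'v set \<Rightarrow> ('v \<Rightarrow> 'v \<Rightarrow> bool) \<Rightarrow> bool" where
  "word_representable V E \<longleftrightarrow>
     (\<exists>w. set w = V \<and> (\<forall>a\<in>V. \<forall>b\<in>V. a \<noteq> b \<longrightarrow> (E a b \<longleftrightarrow> alternate w a b)))"

definition orientation :: "('v \<Rightarrow> 'v \<Rightarrow> bool) \<Rightarrow> ('v \<Rightarrow> 'v \<Rightarrow> bool) \<Rightarrow> bool" where
  "orientation E D \<longleftrightarrow>
     (\<forall>a b. D a b \<longrightarrow> E a b) \<and> (\<forall>a b. E a b \<longrightarrow> D a b \<or> D b a) \<and> (\<forall>a b. D a b \<longrightarrow> \<not> D b a)"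

definition shortcut :: "('v \<Rightarrow> 'v \<Rightarrow> bool) \<Rightarrow> ('v \<Rightarrow> 'v \<Rightarrow> bool) \<Rightarrow> 'v list \<Rightarrow> bool" where
  "shortcut E D vs \<longleftrightarrow>
     length vs \<ge> 4 \<and> distinct vs \<and>
     (\<forall>i. Suc i < length vs \<longrightarrow> D (vs ! i) (vs ! Suc i)) \<and>
     D (hd vs) (last vs) \<and>
     (\<exists>i j. i < length vs \<and> j < length vs \<and> i \<noteq> j \<and> \<not> E (vs ! i) (vs ! j))"

definition semi_transitive :: "('v \<Rightarrow> 'v \<Rightarrow> bool) \<Rightarrow> ('v \<Rightarrow> 'v \<Rightarrow> bool) \<Rightarrow> bool" where
  "semi_transitive E D \<longleftrightarrow> acyclic {(a, b). D a b} \<and> \<not> (\<exists>vs. shortcut E D vs)"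

text \<open>p = p_1 \<rightarrow> ... \<rightarrow> p_l is the directed Hamiltonian path of the clique C (0-based indices).\<close>
definition ham_path :: "('v \<Rightarrow> 'v \<Rightarrow> bool) \<Rightarrow> 'v set \<Rightarrow> 'v list \<Rightarrow> bool" where
  "ham_path D C p \<longleftrightarrow> distinct p \<and> set p = C \<and> (\<forall>i j. i < j \<and> j < length p \<longrightarrow> D (p ! i) (p ! j))"

definition typeA :: "('v \<Rightarrow> 'v \<Rightarrow> bool) \<Rightarrow> ('v \<Rightarrow> 'v \<Rightarrow> bool) \<Rightarrow> 'v list \<Rightarrow> 'v \<Rightarrow> bool" where
  "typeA E D p x \<longleftrightarrow>
     (\<exists>a b. {i. i < length p \<and> E x (p ! i)} = {i. a \<le> i \<and> i \<le> b}) \<and>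
     (\<forall>i < length p. E x (p ! i) \<longrightarrow> D x (p ! i))"

definition typeB :: "('v \<Rightarrow> 'v \<Rightarrow> bool) \<Rightarrow> ('v \<Rightarrow> 'v \<Rightarrow> bool) \<Rightarrow> 'v list \<Rightarrow> 'v \<Rightarrow> bool" where
  "typeB E D p x \<longleftrightarrow>
     (\<exists>a b. {i. i < length p \<and> E x (p ! i)} = {i. a \<le> i \<and> i \<le> b}) \<and>
     (\<forall>i < length p. E x (p ! i) \<longrightarrow> D (p ! i) x)"

text \<open>Type C with (0-based) last source index s and first sink index t.\<close>
definition typeC_with :: "('v \<Rightarrow> 'v \<Rightarrow> bool) \<Rightarrow> ('v \<Rightarrow> 'v \<Rightarrow> bool) \<Rightarrow> 'v list \<Rightarrow> 'v \<Rightarrow> nat \<Rightarrow> nat \<Rightarrow> bool" where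
  "typeC_with E D p x s t \<longleftrightarrow>
     s < t \<and> t < length p \<and>
     (\<forall>i < length p. E x (p ! i) \<longleftrightarrow> (i \<le> s \<or> t \<le> i)) \<and>
     (\<forall>i \<le> s. D (p ! i) x) \<and>
     (\<forall>i. t \<le> i \<and> i < length p \<longrightarrow> D x (p ! i))"

definition typeC :: "('v \<Rightarrow> 'v \<Rightarrow> bool) \<Rightarrow> ('v \<Rightarrow> 'v \<Rightarrow> bool) \<Rightarrow> 'v list \<Rightarrow> 'v \<Rightarrow> bool" where
  "typeC E D p x \<longleftrightarrow> (\<exists>s t. typeC_with E D p x s t)"

definition source_group :: "('v \<Rightarrow> 'v \<Rightarrow> bool) \<Rightarrow> ('v \<Rightarrow> 'v \<Rightarrow> bool) \<Rightarrow> 'v list \<Rightarrow> 'v \<Rightarrow> 'v set" where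
  "source_group E D p x = {p ! i | i. \<exists>s t. typeC_with E D p x s t \<and> i \<le> s}"

definition sink_group :: "('v \<Rightarrow> 'v \<Rightarrow> bool) \<Rightarrow> ('v \<Rightarrow> 'v \<Rightarrow> bool) \<Rightarrow> 'v list \<Rightarrow> 'v \<Rightarrow> 'v set" where
  "sink_group E D p x = {p ! i | i. \<exists>s t. typeC_with E D p x s t \<and> t \<le> i \<and> i < length p}"

end

theory Submission
  imports Defs
begin

text \<open>Every claim comes down to a directed triangle. The source-group vertex u = p!s points to x
  and x points to the sink-group vertex v = p!t. If x \<rightarrow> y, then a type A neighbour y of u, or a
  type C vertex y with u in its sink-group, satisfies y \<rightarrow> u, closing the cycle x \<rightarrow> y \<rightarrow> u \<rightarrow> x.
  Dually, if y \<rightarrow> x, then v \<rightarrow> y in both cases, closing x \<rightarrow> v \<rightarrow> y \<rightarrow> x. Acyclicity of the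
  semi-transitive orientation forbids both.\<close>

lemma semi_transitive_no_3cycle:
  assumes "semi_transitive E D" "D a b" "D b c" "D c a"
  shows False
proof -
  let ?R = "{(a, b). D a b}"
  from assms(2-4) have "(a, b) \<in> ?R\<^sup>+" "(b, c) \<in> ?R\<^sup>+" "(c, a) \<in> ?R\<^sup>+" by auto
  then have "(a, a) \<in> ?R\<^sup>+" by (meson trancl_trans)
  with assms(1) show False unfolding semi_transitive_def acyclic_def by blast
qed

lemma typeA_out_edge:
  assumes "typeA E D p y" "i < length p" "E y (p ! i)"
  shows "D y (p ! i)"
  using assms unfolding typeA_def by blast

lemma typeB_in_edge:
  assumes "typeB E D p y" "i < length p" "E y (p ! i)"
  shows "D (p ! i) y"
  using assms unfolding typeB_def by blast

lemma sink_group_out_edge: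
  assumes "q \<in> sink_group E D p y"
  shows "D y q"
  using assms unfolding sink_group_def typeC_with_def by auto

lemma source_group_in_edge:
  assumes "q \<in> source_group E D p y"
  shows "D q y"
  using assms unfolding source_group_def typeC_with_def by auto

theorem mainTheorem13:
  fixes X Y :: "'v set" and E D :: "'v \<Rightarrow> 'v \<Rightarrow> bool" and p :: "'v list"
    and x y :: 'v and s t :: nat
  assumes "clique_union_graph X Y E"
    and "word_representable (X \<union> Y) E"
    and "orientation E D"
    and "semi_transitive E D"
    and "ham_path D Y p"
    and "x \<in> X" and "y \<in> X" and "y \<noteq> x"
    and "typeC_with E D p x s t"
  shows "(D x y \<longrightarrow>
            \<not> (typeA E D p y \<and> E y (p ! s) \<and> E y (p ! t)) \<and>
            (typeC E D p y \<longrightarrow> p ! s \<notin> sink_group E D p y)) \<and>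
         (D y x \<longrightarrow>
            \<not> (typeB E D p y \<and> E y (p ! s) \<and> E y (p ! t)) \<and>
            (typeC E D p y \<longrightarrow> p ! t \<notin> source_group E D p y))"
proof -
  from assms(9) have "s < length p" "t < length p" and u_x: "D (p ! s) x" and x_v: "D x (p ! t)"
    unfolding typeC_with_def by auto
  have "D y (p ! s) \<Longrightarrow> \<not> D x y" and "D (p ! t) y \<Longrightarrow> \<not> D y x"
    using semi_transitive_no_3cycle[OF assms(4)] u_x x_v by blast+
  then show ?thesis
    using \<open>s < length p\<close> \<open>t < length p\<close>
    by (meson typeA_out_edge typeB_in_edge sink_group_out_edge source_group_in_edge)
qed

end
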